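(* Let $(M,d)$ be a complete geodesic space satisfying the non-expansive projection property $(NE)$: for all closed weakly convex sets $C\subset M$ and all $x,y\in M$, $d(x_C,y_C)\le d(x,y)$ whenever $x_C\in\pi_C(x)$ and $y_C\in\pi_C(y)$. Then $(M,d)$ satisfies the symmetric orthogonality property $(SO)$.
   Context: Geodesics are maps $\gamma:[0,1]\to M$ with $d(\gamma_t,\gamma_s)=|t-s|d(\gamma_0,\gamma_1)$. For geodesics with $p=\gamma_0=\eta_0$, $\gamma\perp_p\eta$ means $d(p,\gamma_t)\le d(\eta_s,\gamma_t)$ for all $s,t\in[0,1]$; $(SO)$ means $\gamma\perp_p\eta$ implies $\eta\perp_p\gamma$ for all such geodesics. $C$ is weakly convex if any two of its points are joined by some geodesic in $C$. $\pi_C(x)$ is the set of points of $C$ at distance $\inf_{z\in C}d(x,z)$ from $x$. *)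

theory Defs
  imports "HOL-Analysis.Analysis"
begin

definition geodesic :: "(real \<Rightarrow> 'a::metric_space) \<Rightarrow> bool" where
  "geodesic \<gamma> \<longleftrightarrow> (\<forall>t\<in>{0..1}. \<forall>s\<in>{0..1}.
      dist (\<gamma> t) (\<gamma> s) = \<bar>t - s\<bar> * dist (\<gamma> 0) (\<gamma> 1))"

definition geodesic_space :: "'a::metric_space itself \<Rightarrow> bool" where
  "geodesic_space _ \<longleftrightarrow> (\<forall>x y::'a. \<exists>\<gamma>. geodesic \<gamma> \<and> \<gamma> 0 = x \<and> \<gamma> 1 = y)"

definition orth :: "'a::metric_space \<Rightarrow> (real \<Rightarrow> 'a) \<Rightarrow> (real \<Rightarrow> 'a) \<Rightarrow> bool" where
  "orth p \<gamma> \<eta> \<longleftrightarrow> (\<forall>s\<in>{0..1}. \<forall>t\<in>{0..1}. dist p (\<gamma> t) \<le> dist (\<eta> s) (\<gamma> t))"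

definition SO :: "'a::metric_space itself \<Rightarrow> bool" where
  "SO _ \<longleftrightarrow> (\<forall>(p::'a) \<gamma> \<eta>. geodesic \<gamma> \<and> geodesic \<eta> \<and> \<gamma> 0 = p \<and> \<eta> 0 = p \<and> orth p \<gamma> \<eta>
      \<longrightarrow> orth p \<eta> \<gamma>)"

definition weakly_convex :: "'a::metric_space set \<Rightarrow> bool" where
  "weakly_convex C \<longleftrightarrow> (\<forall>x\<in>C. \<forall>y\<in>C. \<exists>\<gamma>. geodesic \<gamma> \<and> \<gamma> 0 = x \<and> \<gamma> 1 = y \<and> \<gamma> ` {0..1} \<subseteq> C)"

definition proj :: "'a::metric_space set \<Rightarrow> 'a \<Rightarrow> 'a set" where
  "proj C x = {z\<in>C. dist x z = (INF w\<in>C. dist x w)}"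

definition NE :: "'a::metric_space itself \<Rightarrow> bool" where
  "NE _ \<longleftrightarrow> (\<forall>C::'a set. closed C \<and> weakly_convex C \<longrightarrow>
      (\<forall>x y xC yC. xC \<in> proj C x \<and> yC \<in> proj C y \<longrightarrow> dist xC yC \<le> dist x y))"

end

theory Submission
  imports Defs
begin

text \<open>Given \<open>\<gamma> \<perp>\<^sub>p \<eta>\<close>, take \<open>C\<close> to be the image of \<open>\<eta>\<close>, a compact weakly convex set. The
  hypothesis says exactly that \<open>p\<close> is a nearest point of \<open>C\<close> to every \<open>\<gamma> s\<close>, while each
  \<open>\<eta> t\<close> is its own nearest point; non-expansiveness of the projection then gives
  \<open>d(p, \<eta> t) \<le> d(\<gamma> s, \<eta> t)\<close>, which is \<open>\<eta> \<perp>\<^sub>p \<gamma>\<close>.\<close>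

lemma geodesic_lipschitz:
  assumes "geodesic \<gamma>"
  shows "(dist (\<gamma> 0) (\<gamma> 1))-lipschitz_on {0..1} \<gamma>"
proof (rule lipschitz_onI)
  fix x y :: real assume "x \<in> {0..1}" "y \<in> {0..1}"
  then show "dist (\<gamma> x) (\<gamma> y) \<le> dist (\<gamma> 0) (\<gamma> 1) * dist x y"
    using assms unfolding geodesic_def dist_real_def by (metis mult.commute order_refl)
qed simp

lemma geodesic_image_compact:
  assumes "geodesic \<gamma>"
  shows "compact (\<gamma> ` {0..1})"
  using lipschitz_on_continuous_on[OF geodesic_lipschitz[OF assms]]
  by (intro compact_continuous_image) auto

lemma geodesic_reparametrize:
  assumes g: "geodesic \<gamma>" and a: "a \<in> {0..1}" and b: "b \<in> {0..1}"
  shows "geodesic (\<lambda>u. \<gamma> (a + u * (b - a)))"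
    and "u \<in> {0..1} \<Longrightarrow> a + u * (b - a) \<in> {0..1}"
proof -
  have mem: "a + u * (b - a) \<in> {0..1}" if "u \<in> {0..1}" for u
  proof -
    have "a + u * (b - a) = (1 - u) * a + u * b" by (simp add: algebra_simps)
    moreover have "(1 - u) * a + u * b \<le> (1 - u) * 1 + u * 1"
      using a b that by (intro add_mono mult_left_mono) auto
    ultimately show ?thesis using a b that by auto
  qed
  then show "u \<in> {0..1} \<Longrightarrow> a + u * (b - a) \<in> {0..1}" .
  let ?D = "dist (\<gamma> 0) (\<gamma> 1)"
  have dist_\<gamma>: "dist (\<gamma> x) (\<gamma> y) = \<bar>x - y\<bar> * ?D" if "x \<in> {0..1}" "y \<in> {0..1}" for x y
    using g that unfolding geodesic_def by blast
  show "geodesic (\<lambda>u. \<gamma> (a + u * (b - a)))"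
    unfolding geodesic_def
  proof (intro ballI)
    fix t s :: real assume "t \<in> {0..1}" "s \<in> {0..1}"
    then have "dist (\<gamma> (a + t * (b - a))) (\<gamma> (a + s * (b - a)))
        = \<bar>(a + t * (b - a)) - (a + s * (b - a))\<bar> * ?D"
      by (intro dist_\<gamma> mem)
    also have "\<bar>(a + t * (b - a)) - (a + s * (b - a))\<bar> = \<bar>t - s\<bar> * \<bar>b - a\<bar>"
      by (simp add: abs_mult[symmetric] left_diff_distrib)
    also have "\<bar>t - s\<bar> * \<bar>b - a\<bar> * ?D = \<bar>t - s\<bar> * dist (\<gamma> (a + 0 * (b - a))) (\<gamma> (a + 1 * (b - a)))"
      using dist_\<gamma>[OF a b] by (simp add: abs_minus_commute mult.assoc)
    finally show "dist (\<gamma> (a + t * (b - a))) (\<gamma> (a + s * (b - a))) =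
        \<bar>t - s\<bar> * dist (\<gamma> (a + 0 * (b - a))) (\<gamma> (a + 1 * (b - a)))" .
  qed
qed

lemma geodesic_image_weakly_convex:
  assumes "geodesic \<gamma>"
  shows "weakly_convex (\<gamma> ` {0..1})"
  unfolding weakly_convex_def
proof (intro ballI)
  fix x y assume "x \<in> \<gamma> ` {0..1}" "y \<in> \<gamma> ` {0..1}"
  then obtain a b where a: "a \<in> {0..1}" "x = \<gamma> a" and b: "b \<in> {0..1}" "y = \<gamma> b" by auto
  show "\<exists>\<gamma>'. geodesic \<gamma>' \<and> \<gamma>' 0 = x \<and> \<gamma>' 1 = y \<and> \<gamma>' ` {0..1} \<subseteq> \<gamma> ` {0..1}"
  proof (intro exI conjI)
    show "geodesic (\<lambda>u. \<gamma> (a + u * (b - a)))" by (rule geodesic_reparametrize(1)[OF assms a(1) b(1)])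
    show "(\<lambda>u. \<gamma> (a + u * (b - a))) ` {0..1} \<subseteq> \<gamma> ` {0..1}"
      using geodesic_reparametrize(2)[OF assms a(1) b(1)] by blast
  qed (use a b in simp_all)
qed

lemma proj_memI:
  assumes "z \<in> C" and "\<And>w. w \<in> C \<Longrightarrow> dist x z \<le> dist x w"
  shows "z \<in> proj C x"
proof -
  have "(INF w\<in>C. dist x w) = dist x z"
    by (rule cInf_eq_minimum) (use assms in auto)
  then show ?thesis using assms(1) unfolding proj_def by simp
qed

lemma self_mem_proj: "z \<in> C \<Longrightarrow> z \<in> proj C z"
  by (rule proj_memI) auto

lemma orth_imp_mem_proj:
  assumes "orth p \<gamma> \<eta>" and "\<eta> 0 = p" and "s \<in> {0..1}"
  shows "p \<in> proj (\<eta> ` {0..1}) (\<gamma> s)"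
proof (rule proj_memI)
  show "p \<in> \<eta> ` {0..1}" using assms(2) by force
  fix w assume "w \<in> \<eta> ` {0..1}"
  then show "dist (\<gamma> s) p \<le> dist (\<gamma> s) w"
    using assms(1,3) unfolding orth_def by (auto simp: dist_commute)
qed

theorem proposition17:
  assumes "complete (UNIV :: 'a::metric_space set)"
    and "geodesic_space TYPE('a)"
    and "NE TYPE('a)"
  shows "SO TYPE('a)"
  unfolding SO_def
proof (intro allI impI)
  fix p :: 'a and \<gamma> \<eta>
  assume h: "geodesic \<gamma> \<and> geodesic \<eta> \<and> \<gamma> 0 = p \<and> \<eta> 0 = p \<and> orth p \<gamma> \<eta>"
  let ?C = "\<eta> ` {0..1}"
  have "closed ?C" using h geodesic_image_compact compact_imp_closed by blast
  moreover have "weakly_convex ?C" using h geodesic_image_weakly_convex by blast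
  ultimately have nonexpansive:
      "\<And>x y xC yC. xC \<in> proj ?C x \<Longrightarrow> yC \<in> proj ?C y \<Longrightarrow> dist xC yC \<le> dist x y"
    using assms(3) unfolding NE_def by blast
  show "orth p \<eta> \<gamma>"
    unfolding orth_def
  proof (intro ballI)
    fix s t :: real assume "s \<in> {0..1}" "t \<in> {0..1}"
    have "p \<in> proj ?C (\<gamma> s)" using h \<open>s \<in> {0..1}\<close> by (intro orth_imp_mem_proj) auto
    moreover have "\<eta> t \<in> proj ?C (\<eta> t)" using \<open>t \<in> {0..1}\<close> by (intro self_mem_proj) auto
    ultimately show "dist p (\<eta> t) \<le> dist (\<gamma> s) (\<eta> t)" by (rule nonexpansive)
  qed
qed

end
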